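(* Let $T,S\in \mathcal{B}_A(\mathcal{H})$. Then \[ \omega_A(T\pm iS)\leq 2\,\omega_{\mathbb{A}}\left[\begin{pmatrix} O&T\\ iS &O \end{pmatrix}\right]. \]
   Context: $\mathcal{H}$ is a complex Hilbert space and $A\in\mathcal{B}(\mathcal{H})$ is a nonzero positive (semidefinite) operator, inducing the semi-inner product $\langle x,y\rangle_A=\langle Ax,y\rangle$ and seminorm $\|x\|_A=\|A^{1/2}x\|$. $\mathcal{B}_A(\mathcal{H})=\{T\in\mathcal{B}(\mathcal{H}):\mathcal{R}(T^*A)\subseteq\mathcal{R}(A)\}$ is the set of operators admitting an $A$-adjoint (an operator $X$ with $\langle Tx,y\rangle_A=\langle x,Xy\rangle_A$ for all $x,y$). The $A$-numerical radius is $\omega_A(T)=\sup\{|\langle Tx,x\rangle_A| : x\in\mathcal{H},\ \|x\|_A=1\}$. $\mathbb{A}=\begin{pmatrix}A&O\\O&A\end{pmatrix}$ is the positive diagonal operator on $\mathcal{H}\oplus\mathcal{H}$, and $\omega_{\mathbb{A}}$ is the corresponding $\mathbb{A}$-numerical radius on $\mathcal{H}\oplus\mathcal{H}$ (with $\langle x,y\rangle_{\mathbb{A}}=\langle x_1,y_1\rangle_A+\langle x_2,y_2\rangle_A$). Here $iS$ denotes the operator $S$ multiplied by the imaginary unit $i$, and $O$ is the zero operator. *)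

theory Defs
  imports Complex_Main
begin

text \<open>A complex Hilbert space is modelled by a carrier type 'h (an abelian group),
  a complex scalar multiplication sc and an inner product ip (linear in the first
  argument, conjugate-linear in the second), complete for the induced norm.\<close>

definition hnorm :: "('h \<Rightarrow> 'h \<Rightarrow> complex) \<Rightarrow> 'h \<Rightarrow> real" where
  "hnorm ip x = sqrt (Re (ip x x))"

definition complex_hilbert_space ::
  "(complex \<Rightarrow> 'h::ab_group_add \<Rightarrow> 'h) \<Rightarrow> ('h \<Rightarrow> 'h \<Rightarrow> complex) \<Rightarrow> bool" where
  "complex_hilbert_space sc ip \<longleftrightarrow>
     vector_space sc \<and>
     (\<forall>x y z. ip (x + y) z = ip x z + ip y z) \<and>
     (\<forall>c x y. ip (sc c x) y = c * ip x y) \<and>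
     (\<forall>x y. ip y x = cnj (ip x y)) \<and>
     (\<forall>x. Im (ip x x) = 0 \<and> Re (ip x x) \<ge> 0) \<and>
     (\<forall>x. ip x x = 0 \<longrightarrow> x = 0) \<and>
     (\<forall>f :: nat \<Rightarrow> 'h.
        (\<forall>e>0. \<exists>N. \<forall>m\<ge>N. \<forall>n\<ge>N. hnorm ip (f m - f n) < e) \<longrightarrow>
        (\<exists>l. (\<lambda>n. hnorm ip (f n - l)) \<longlonglongrightarrow> 0))"

definition bounded_op ::
  "(complex \<Rightarrow> 'h::ab_group_add \<Rightarrow> 'h) \<Rightarrow> ('h \<Rightarrow> 'h \<Rightarrow> complex) \<Rightarrow> ('h \<Rightarrow> 'h) \<Rightarrow> bool" where
  "bounded_op sc ip T \<longleftrightarrow> Vector_Spaces.linear sc sc T \<and> (\<exists>K. \<forall>x. hnorm ip (T x) \<le> K * hnorm ip x)"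

definition hadj :: "('h \<Rightarrow> 'h \<Rightarrow> complex) \<Rightarrow> ('h \<Rightarrow> 'h) \<Rightarrow> 'h \<Rightarrow> 'h" where
  "hadj ip T = (\<lambda>y. THE z. \<forall>x. ip (T x) y = ip x z)"

definition positive_op ::
  "(complex \<Rightarrow> 'h::ab_group_add \<Rightarrow> 'h) \<Rightarrow> ('h \<Rightarrow> 'h \<Rightarrow> complex) \<Rightarrow> ('h \<Rightarrow> 'h) \<Rightarrow> bool" where
  "positive_op sc ip A \<longleftrightarrow> bounded_op sc ip A \<and>
     (\<forall>x. Im (ip (A x) x) = 0 \<and> Re (ip (A x) x) \<ge> 0)"

definition BA ::
  "(complex \<Rightarrow> 'h::ab_group_add \<Rightarrow> 'h) \<Rightarrow> ('h \<Rightarrow> 'h \<Rightarrow> complex) \<Rightarrow> ('h \<Rightarrow> 'h) \<Rightarrow> ('h \<Rightarrow> 'h) set" where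
  "BA sc ip A = {T. bounded_op sc ip T \<and> range (hadj ip T \<circ> A) \<subseteq> range A}"

definition ipA :: "('h \<Rightarrow> 'h \<Rightarrow> complex) \<Rightarrow> ('h \<Rightarrow> 'h) \<Rightarrow> 'h \<Rightarrow> 'h \<Rightarrow> complex" where
  "ipA ip A x y = ip (A x) y"

definition normA :: "('h \<Rightarrow> 'h \<Rightarrow> complex) \<Rightarrow> ('h \<Rightarrow> 'h) \<Rightarrow> 'h \<Rightarrow> real" where
  "normA ip A x = sqrt (Re (ipA ip A x x))"

definition omegaA :: "('h \<Rightarrow> 'h \<Rightarrow> complex) \<Rightarrow> ('h \<Rightarrow> 'h) \<Rightarrow> ('h \<Rightarrow> 'h) \<Rightarrow> real" where
  "omegaA ip A T = (SUP x\<in>{x. normA ip A x = 1}. cmod (ipA ip A (T x) x))"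

text \<open>The semi-inner product on H \<oplus> H induced by the diagonal operator diag(A,A):
  <x,y>_AA = <x1,y1>_A + <x2,y2>_A.\<close>
definition ipAA :: "('h \<Rightarrow> 'h \<Rightarrow> complex) \<Rightarrow> ('h \<Rightarrow> 'h) \<Rightarrow> 'h \<times> 'h \<Rightarrow> 'h \<times> 'h \<Rightarrow> complex" where
  "ipAA ip A x y = ipA ip A (fst x) (fst y) + ipA ip A (snd x) (snd y)"

definition normAA :: "('h \<Rightarrow> 'h \<Rightarrow> complex) \<Rightarrow> ('h \<Rightarrow> 'h) \<Rightarrow> 'h \<times> 'h \<Rightarrow> real" where
  "normAA ip A x = sqrt (Re (ipAA ip A x x))"

definition omegaAA ::
  "('h \<Rightarrow> 'h \<Rightarrow> complex) \<Rightarrow> ('h \<Rightarrow> 'h) \<Rightarrow> ('h \<times> 'h \<Rightarrow> 'h \<times> 'h) \<Rightarrow> real" where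
  "omegaAA ip A M = (SUP x\<in>{x. normAA ip A x = 1}. cmod (ipAA ip A (M x) x))"

text \<open>The operator matrix [[P, Q], [R, U]] acting on H \<oplus> H.\<close>
definition opmat :: "('h \<Rightarrow> 'h::ab_group_add) \<Rightarrow> ('h \<Rightarrow> 'h) \<Rightarrow> ('h \<Rightarrow> 'h) \<Rightarrow> ('h \<Rightarrow> 'h)
    \<Rightarrow> 'h \<times> 'h \<Rightarrow> 'h \<times> 'h" where
  "opmat P Q R U = (\<lambda>x. (P (fst x) + Q (snd x), R (fst x) + U (snd x)))"

end

theory Submission
  imports Defs "HOL-Analysis.Urysohn"
begin

(* For an A-unit vector x, the vectors z = (x, x)/sqrt 2 and z = (x, i x)/sqrt 2 are AA-unit
   vectors with <M z, z>_AA = 1/2 <(T + iS) x, x>_A and i/2 <(T - iS) x, x>_A, where M is the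
   operator matrix; so each value in the supremum defining omegaA (T +- iS) is at most
   2 omegaAA M.  The substance lies in the suprema being finite (a real Sup of an unbounded set
   is an unspecified value): every T in B_A(H) is bounded for the seminorm normA.  By the Riesz
   representation and projection theorems T has an A-adjoint X with values in the closure of
   R(A); the uniform boundedness principle makes X bounded, and Krein's iteration argument for
   the A-symmetric operator R = X T gives normA (T x)^2 = <x, R x>_A <= L normA x ^ 2. *)

section \<open>Real inequalities\<close>

lemma ex_pos_factor_bound:
  fixes a b :: "'a \<Rightarrow> real"
  assumes "\<And>x. a x \<le> K * b x" and "\<And>x. 0 \<le> b x"
  shows "\<exists>K'>0. \<forall>x. a x \<le> K' * b x"
proof (intro exI conjI allI)
  fix x
  have "K * b x \<le> (max K 0 + 1) * b x"
    using assms(2)[of x] by (intro mult_right_mono) auto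
  with assms(1)[of x] show "a x \<le> (max K 0 + 1) * b x" by linarith
qed simp

lemma pow2_bounded_imp_le_one:
  fixes q D :: real
  assumes "\<And>n. q ^ 2 ^ n \<le> D"
  shows "q \<le> 1"
proof (rule ccontr)
  assume "\<not> q \<le> 1"
  then obtain n where "D < q ^ n" using real_arch_pow[of q D] by auto
  also have "q ^ n \<le> q ^ 2 ^ n"
    using \<open>\<not> q \<le> 1\<close> by (intro power_increasing) (simp_all add: less_imp_le less_exp)
  finally show False using assms[of n] by simp
qed

lemma pow2_iterate_le:
  fixes f :: "nat \<Rightarrow> real"
  assumes "0 \<le> s" and "\<And>k. 0 \<le> f k" and square: "\<And>k. (f k)\<^sup>2 \<le> f (2 * k) * s"
  shows "f 1 ^ 2 ^ n \<le> f (2 ^ n) * s ^ (2 ^ n - 1)"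
proof (induction n)
  case 0
  then show ?case by simp
next
  case (Suc n)
  have "f 1 ^ 2 ^ Suc n = (f 1 ^ 2 ^ n)\<^sup>2"
    by (simp add: power_mult[symmetric] mult.commute)
  also have "\<dots> \<le> (f (2 ^ n) * s ^ (2 ^ n - 1))\<^sup>2"
    using Suc.IH by (rule power_mono) (use assms(2) in simp)
  also have "\<dots> = (f (2 ^ n))\<^sup>2 * s ^ (2 * (2 ^ n - 1))"
    by (simp add: power_mult_distrib power_mult[symmetric] mult.commute)
  also have "\<dots> \<le> f (2 ^ Suc n) * s * s ^ (2 * (2 ^ n - 1))"
    using square[of "2 ^ n"] \<open>0 \<le> s\<close> by (intro mult_right_mono) auto
  also have "\<dots> = f (2 ^ Suc n) * s ^ (2 ^ Suc n - 1)"
  proof -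
    have "1 \<le> (2::nat) ^ n" by simp
    then have "Suc (2 * (2 ^ n - 1)) = 2 * 2 ^ n - (1::nat)" by arith
    then have "Suc (2 * (2 ^ n - 1)) = 2 ^ Suc n - (1::nat)" by simp
    then show ?thesis by (metis mult.assoc power_Suc)
  qed
  finally show ?case .
qed

section \<open>Hermitian forms\<close>

locale hermitian_form =
  fixes sc :: "complex \<Rightarrow> 'h::ab_group_add \<Rightarrow> 'h" and B :: "'h \<Rightarrow> 'h \<Rightarrow> complex"
  assumes add_left: "B (x + y) z = B x z + B y z"
    and scale_left: "B (sc c x) y = c * B x y"
    and hermitian: "B y x = cnj (B x y)"
begin

lemma zero_left [simp]: "B 0 z = 0"
  using add_left[of 0 0 z] by simp

lemma minus_left: "B (- x) z = - B x z"
  using add_left[of x "- x" z] by (simp add: eq_neg_iff_add_eq_0 add.commute)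

lemma diff_left: "B (x - y) z = B x z - B y z"
  using add_left[of x "- y" z] by (simp add: minus_left)

lemma add_right: "B z (x + y) = B z x + B z y"
  by (metis add_left complex_cnj_add hermitian)

lemma scale_right: "B x (sc c y) = cnj c * B x y"
  by (metis complex_cnj_mult hermitian scale_left)

lemma zero_right [simp]: "B z 0 = 0"
  by (metis complex_cnj_zero hermitian zero_left)

lemma minus_right: "B z (- x) = - B z x"
  by (metis complex_cnj_minus hermitian minus_left)

lemma diff_right: "B z (x - y) = B z x - B z y"
  by (metis complex_cnj_diff hermitian diff_left)

lemma diag_real: "B x x = of_real (Re (B x x))"
  using hermitian[of x x] by (simp add: complex_eq_iff)

lemma Re_swap: "Re (B y x) = Re (B x y)"
  using hermitian[of x y] by simp

lemma Re_diag_add: "Re (B (x + y) (x + y)) = Re (B x x) + 2 * Re (B x y) + Re (B y y)"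
  by (simp add: add_left add_right Re_swap[of x y])

lemma Re_diag_diff: "Re (B (x - y) (x - y)) = Re (B x x) - 2 * Re (B x y) + Re (B y y)"
  by (simp add: diff_left diff_right Re_swap[of x y])

lemma Re_diag_diff_scaled:
  fixes r :: real
  shows "Re (B (x - sc (of_real r * B x y) y) (x - sc (of_real r * B x y) y))
           = Re (B x x) - 2 * r * (cmod (B x y))\<^sup>2 + r\<^sup>2 * (cmod (B x y))\<^sup>2 * Re (B y y)"
proof -
  define t where "t = of_real r * B x y"
  have "B (x - sc t y) (x - sc t y) = B x x - 2 * of_real (Re (cnj t * B x y)) + t * cnj t * B y y"
    by (simp add: diff_left diff_right scale_left scale_right hermitian[of y x] complex_eq_iff
        algebra_simps)
  also have "Re (cnj t * B x y) = r * (cmod (B x y))\<^sup>2"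
    unfolding t_def cmod_power2 by (simp add: power2_eq_square algebra_simps)
  also have "t * cnj t * B y y = of_real (r\<^sup>2 * (cmod (B x y))\<^sup>2 * Re (B y y))"
    unfolding t_def cmod_power2 by (subst diag_real) (simp add: complex_eq_iff power2_eq_square algebra_simps)
  finally show ?thesis unfolding t_def by simp
qed

end

locale pos_hermitian_form = hermitian_form +
  assumes nonneg: "0 \<le> Re (B x x)"
begin

lemma hnorm_nonneg [simp]: "0 \<le> hnorm B x"
  using nonneg[of x] by (simp add: hnorm_def)

lemma hnorm_zero [simp]: "hnorm B 0 = 0"
  by (simp add: hnorm_def)

lemma hnorm_sq: "(hnorm B x)\<^sup>2 = Re (B x x)"
  using nonneg[of x] by (simp add: hnorm_def)

lemma cmod_diag: "cmod (B x x) = (hnorm B x)\<^sup>2"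
  using nonneg[of x] by (subst diag_real) (simp add: hnorm_sq)

lemma cauchy_schwarz_sq: "(cmod (B x y))\<^sup>2 \<le> Re (B x x) * Re (B y y)"
proof -
  define a where "a = (cmod (B x y))\<^sup>2"
  define P where "P = Re (B x x)"
  define Q where "Q = Re (B y y)"
  have quad: "0 \<le> P - 2 * r * a + r\<^sup>2 * a * Q" for r
    using nonneg[of "x - sc (of_real r * B x y) y"]
    unfolding Re_diag_diff_scaled a_def P_def Q_def .
  have "0 \<le> a" "0 \<le> Q" by (simp_all add: a_def Q_def nonneg)
  show ?thesis
  proof (cases "Q = 0")
    case True
    have "a = 0"
    proof (rule ccontr)
      assume "a \<noteq> 0"
      with \<open>0 \<le> a\<close> have "0 < a" by simp
      with quad[of "(P + 1) / (2 * a)"] True show False by (simp add: field_simps)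
    qed
    then show ?thesis using nonneg[of x] nonneg[of y] by (simp add: a_def)
  next
    case False
    with \<open>0 \<le> Q\<close> have "0 < Q" by simp
    with quad[of "1 / Q"] have "a \<le> P * Q" by (simp add: power2_eq_square field_simps)
    then show ?thesis by (simp add: a_def P_def Q_def)
  qed
qed

lemma cauchy_schwarz: "cmod (B x y) \<le> hnorm B x * hnorm B y"
  by (metis cauchy_schwarz_sq hnorm_def norm_ge_zero real_le_rsqrt real_sqrt_mult)

lemma Re_le_hnorm_mult: "Re (B x y) \<le> hnorm B x * hnorm B y"
  using cauchy_schwarz complex_Re_le_cmod order_trans by blast

lemma hnorm_scale: "hnorm B (sc c x) = cmod c * hnorm B x"
proof -
  have "B (sc c x) (sc c x) = (c * cnj c) * B x x"
    by (simp add: scale_left scale_right mult.assoc)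
  also have "c * cnj c = of_real ((cmod c)\<^sup>2)"
    by (rule complex_norm_square[symmetric])
  finally have "B (sc c x) (sc c x) = of_real ((cmod c)\<^sup>2) * B x x" .
  then have "Re (B (sc c x) (sc c x)) = (cmod c)\<^sup>2 * Re (B x x)"
    by simp
  then show ?thesis by (simp add: hnorm_def real_sqrt_mult)
qed

lemma hnorm_triangle: "hnorm B (x + y) \<le> hnorm B x + hnorm B y"
proof -
  have "(hnorm B (x + y))\<^sup>2 \<le> (hnorm B x + hnorm B y)\<^sup>2"
    using Re_le_hnorm_mult[of x y] by (simp add: hnorm_sq Re_diag_add power2_sum)
  then show ?thesis by (rule power2_le_imp_le) simp
qed

lemma hnorm_minus: "hnorm B (- x) = hnorm B x"
  by (simp add: hnorm_def minus_left minus_right)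

lemma hnorm_diff_commute: "hnorm B (x - y) = hnorm B (y - x)"
  using hnorm_minus[of "x - y"] by simp

lemma hnorm_triangle_diff: "hnorm B (x - z) \<le> hnorm B (x - y) + hnorm B (y - z)"
  using hnorm_triangle[of "x - y" "y - z"] by simp

lemma parallelogram:
  "Re (B (x + y) (x + y)) + Re (B (x - y) (x - y)) = 2 * Re (B x x) + 2 * Re (B y y)"
  by (simp add: Re_diag_add Re_diag_diff)

lemma orthogonal_if_locally_minimal:
  assumes min: "\<And>r. 0 < r \<Longrightarrow> hnorm B w \<le> hnorm B (w - sc (of_real r * B w m) m)"
  shows "B w m = 0"
proof -
  define a where "a = (cmod (B w m))\<^sup>2"
  define Q where "Q = Re (B m m)"
  have "0 \<le> Q" by (simp add: Q_def nonneg)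
  have quad: "2 * r * a \<le> r\<^sup>2 * a * Q" if "0 < r" for r
  proof -
    have "Re (B w w) \<le> Re (B (w - sc (of_real r * B w m) m) (w - sc (of_real r * B w m) m))"
      using min[OF that] nonneg by (simp add: hnorm_def)
    then show ?thesis unfolding Re_diag_diff_scaled a_def Q_def by simp
  qed
  define r where "r = 1 / (Q + 1)"
  have "0 < r" "r * Q \<le> 1" using \<open>0 \<le> Q\<close> by (simp_all add: r_def field_simps)
  have "0 \<le> a" by (simp add: a_def)
  have "2 * r * a \<le> r * a * (r * Q)"
    using quad[OF \<open>0 < r\<close>] by (simp add: power2_eq_square algebra_simps)
  also have "\<dots> \<le> r * a"
    using mult_left_le[of "r * Q" "r * a"] \<open>r * Q \<le> 1\<close> \<open>0 < r\<close> \<open>0 \<le> a\<close> by simp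
  finally have "r * a \<le> 0" by linarith
  with \<open>0 < r\<close> \<open>0 \<le> a\<close> have "a = 0" by (simp add: mult_le_0_iff)
  then show ?thesis by (simp add: a_def)
qed

lemma hnorm_funpow_le:
  assumes "\<And>x. hnorm B (R x) \<le> L * hnorm B x" and "0 \<le> L"
  shows "hnorm B ((R ^^ k) x) \<le> L ^ k * hnorm B x"
proof (induction k)
  case 0
  then show ?case by simp
next
  case (Suc k)
  have "hnorm B ((R ^^ Suc k) x) \<le> L * hnorm B ((R ^^ k) x)" by (simp add: assms(1))
  also have "\<dots> \<le> L * (L ^ k * hnorm B x)" using Suc.IH \<open>0 \<le> L\<close> by (rule mult_left_mono)
  finally show ?case by simp
qed

text \<open>Krein's trick: for B-symmetric R, f k = hnorm B ((R ^^ k) x) satisfies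
  f k ^ 2 = B ((R ^^ 2k) x) x \<le> f (2 k) * f 0.\<close>
lemma hnorm_pow2_iterate_le:
  assumes symmetric: "\<And>u v. B (R u) v = B u (R v)"
  shows "hnorm B (R x) ^ 2 ^ n \<le> hnorm B ((R ^^ 2 ^ n) x) * hnorm B x ^ (2 ^ n - 1)"
proof -
  define f where "f k = hnorm B ((R ^^ k) x)" for k
  have iterate_symmetric: "B ((R ^^ k) u) v = B u ((R ^^ k) v)" for k u v
    by (induction k arbitrary: u v) (simp_all add: symmetric funpow_swap1)
  have "(f k)\<^sup>2 \<le> f (2 * k) * f 0" for k
  proof -
    have "(f k)\<^sup>2 = Re (B ((R ^^ (2 * k)) x) x)"
      by (simp add: f_def hnorm_sq iterate_symmetric mult_2 funpow_add)
    also have "\<dots> \<le> f (2 * k) * f 0"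
      unfolding f_def by (simp add: Re_le_hnorm_mult)
    finally show ?thesis .
  qed
  from pow2_iterate_le[where f = f and s = "f 0", OF _ _ this] show ?thesis
    by (simp add: f_def)
qed

lemma hnorm_le_if_symmetric_iterates_bounded:
  assumes symmetric: "\<And>u v. B (R u) v = B u (R v)" and "0 < L"
    and iterates: "\<And>k. hnorm B ((R ^^ k) x) \<le> C * L ^ k"
  shows "hnorm B (R x) \<le> L * hnorm B x"
proof (cases "hnorm B x = 0")
  case True
  with hnorm_pow2_iterate_le[OF symmetric, of x 1] have "hnorm B (R x) = 0" by simp
  then show ?thesis using \<open>0 < L\<close> by (simp add: True)
next
  case False
  define s where "s = hnorm B x"
  have "0 < s" using False by (simp add: s_def order_less_le)
  have "hnorm B (R x) / (L * s) \<le> 1"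
  proof (rule pow2_bounded_imp_le_one)
    fix n :: nat
    have "s ^ 2 ^ n = s * s ^ (2 ^ n - 1)"
      by (metis One_nat_def Suc_diff_1 pos2 power_Suc zero_less_power)
    have "(hnorm B (R x) / (L * s)) ^ 2 ^ n = hnorm B (R x) ^ 2 ^ n / (L ^ 2 ^ n * s ^ 2 ^ n)"
      by (simp add: power_divide power_mult_distrib)
    also have "\<dots> \<le> C * L ^ 2 ^ n * s ^ (2 ^ n - 1) / (L ^ 2 ^ n * s ^ 2 ^ n)"
      using hnorm_pow2_iterate_le[OF symmetric, of x n] iterates[of "2 ^ n"] \<open>0 < s\<close> \<open>0 < L\<close>
      by (intro divide_right_mono order_trans[OF hnorm_pow2_iterate_le[OF symmetric]]
          mult_right_mono) (simp_all add: s_def)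
    also have "\<dots> = C / s"
      using \<open>0 < s\<close> \<open>0 < L\<close> \<open>s ^ 2 ^ n = s * s ^ (2 ^ n - 1)\<close> by simp
    finally show "(hnorm B (R x) / (L * s)) ^ 2 ^ n \<le> C / s" .
  qed
  then show ?thesis
    using \<open>0 < s\<close> \<open>0 < L\<close> by (simp add: s_def field_simps)
qed

end

section \<open>Projection, Riesz representation and uniform boundedness\<close>

lemma complex_hilbert_spaceD:
  fixes sc :: "complex \<Rightarrow> 'h::ab_group_add \<Rightarrow> 'h"
  assumes "complex_hilbert_space sc ip"
  shows "vector_space sc"
    and "ip (x + y) z = ip x z + ip y z" and "ip (sc c x) y = c * ip x y"
    and "ip y x = cnj (ip x y)" and "0 \<le> Re (ip x x)" and "ip x x = 0 \<Longrightarrow> x = 0"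
    and "\<forall>e>0. \<exists>N. \<forall>m\<ge>N. \<forall>n\<ge>N. hnorm ip (f m - f n) < e
      \<Longrightarrow> \<exists>l. (\<lambda>n. hnorm ip (f n - l)) \<longlonglongrightarrow> 0"
proof -
  from assms[unfolded complex_hilbert_space_def] obtain "vector_space sc"
    and add: "\<forall>x y z. ip (x + y) z = ip x z + ip y z"
    and scale: "\<forall>c x y. ip (sc c x) y = c * ip x y"
    and herm: "\<forall>x y. ip y x = cnj (ip x y)"
    and pos: "\<forall>x. Im (ip x x) = 0 \<and> 0 \<le> Re (ip x x)"
    and definite: "\<forall>x. ip x x = 0 \<longrightarrow> x = 0"
    and complete: "\<forall>f :: nat \<Rightarrow> 'h. (\<forall>e>0. \<exists>N. \<forall>m\<ge>N. \<forall>n\<ge>N. hnorm ip (f m - f n) < e) \<longrightarrow>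
        (\<exists>l. (\<lambda>n. hnorm ip (f n - l)) \<longlonglongrightarrow> 0)"
    by (elim conjE) (rule that)
  show "vector_space sc" by fact
  show "ip (x + y) z = ip x z + ip y z" by (rule add[rule_format])
  show "ip (sc c x) y = c * ip x y" by (rule scale[rule_format])
  show "ip y x = cnj (ip x y)" by (rule herm[rule_format])
  show "0 \<le> Re (ip x x)" using pos by blast
  show "ip x x = 0 \<Longrightarrow> x = 0" using definite by blast
  show "\<forall>e>0. \<exists>N. \<forall>m\<ge>N. \<forall>n\<ge>N. hnorm ip (f m - f n) < e
      \<Longrightarrow> \<exists>l. (\<lambda>n. hnorm ip (f n - l)) \<longlonglongrightarrow> 0"
    using complete by blast
qed

locale hilbert =
  fixes sc :: "complex \<Rightarrow> 'h::ab_group_add \<Rightarrow> 'h" and ip :: "'h \<Rightarrow> 'h \<Rightarrow> complex"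
  assumes hilbert: "complex_hilbert_space sc ip"
begin

sublocale pos_hermitian_form sc ip
  by unfold_locales (fact complex_hilbert_spaceD[OF hilbert])+

sublocale sc: module sc
  using complex_hilbert_spaceD(1)[OF hilbert] by (simp add: module_iff_vector_space)

lemma hnorm_eq_0_iff [simp]: "hnorm ip x = 0 \<longleftrightarrow> x = 0"
proof
  assume "hnorm ip x = 0"
  then have "ip x x = 0" by (subst diag_real) (simp add: hnorm_def)
  then show "x = 0" by (rule complex_hilbert_spaceD(6)[OF hilbert])
qed (simp add: hnorm_def)

lemma hnorm_pos_iff: "0 < hnorm ip x \<longleftrightarrow> x \<noteq> 0"
  using hnorm_nonneg[of x] hnorm_eq_0_iff[of x] by linarith

lemma Cauchy_convergent:
  "\<forall>e>0. \<exists>N. \<forall>m\<ge>N. \<forall>n\<ge>N. hnorm ip (f m - f n) < e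
    \<Longrightarrow> \<exists>l. (\<lambda>n. hnorm ip (f n - l)) \<longlonglongrightarrow> 0"
  by (rule complex_hilbert_spaceD(7)[OF hilbert])

lemma eq_if_ip_right_eq:
  assumes "\<And>x. ip x z1 = ip x z2"
  shows "z1 = z2"
proof -
  from assms have "ip (z1 - z2) (z1 - z2) = 0" by (simp add: diff_right)
  then show ?thesis using hnorm_eq_0_iff[of "z1 - z2"] by (simp add: hnorm_def)
qed

lemma hnorm_midpoint: "hnorm ip ((x - a) + (x - b)) = 2 * hnorm ip (x - sc (1/2) (a + b))"
proof -
  have "(x - a) + (x - b) = sc 2 (x - sc (1/2) (a + b))"
    using sc.scale_left_distrib[of 1 1 x] by (simp add: sc.scale_right_diff_distrib)
  then show ?thesis by (simp add: hnorm_scale)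
qed

definition closed_subspace :: "'h set \<Rightarrow> bool" where
  "closed_subspace M \<longleftrightarrow>
     0 \<in> M \<and> (\<forall>x\<in>M. \<forall>y\<in>M. x + y \<in> M) \<and> (\<forall>c. \<forall>x\<in>M. sc c x \<in> M) \<and>
     (\<forall>x. (\<forall>e>0. \<exists>m\<in>M. hnorm ip (x - m) < e) \<longrightarrow> x \<in> M)"

lemma closed_subspaceD:
  assumes "closed_subspace M"
  shows closed_subspace_zero: "0 \<in> M"
    and closed_subspace_add: "x \<in> M \<Longrightarrow> y \<in> M \<Longrightarrow> x + y \<in> M"
    and closed_subspace_scale: "x \<in> M \<Longrightarrow> sc c x \<in> M"
    and closed_subspace_closed: "(\<And>e. 0 < e \<Longrightarrow> \<exists>m\<in>M. hnorm ip (x - m) < e) \<Longrightarrow> x \<in> M"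
proof -
  from assms obtain zero: "0 \<in> M" and add: "\<forall>x\<in>M. \<forall>y\<in>M. x + y \<in> M"
    and scale: "\<forall>c. \<forall>x\<in>M. sc c x \<in> M"
    and closed: "\<forall>x. (\<forall>e>0. \<exists>m\<in>M. hnorm ip (x - m) < e) \<longrightarrow> x \<in> M"
    unfolding closed_subspace_def by (elim conjE) (rule that)
  show "0 \<in> M" by (fact zero)
  show "x \<in> M \<Longrightarrow> y \<in> M \<Longrightarrow> x + y \<in> M" using add by blast
  show "x \<in> M \<Longrightarrow> sc c x \<in> M" using scale by blast
  show "x \<in> M" if "\<And>e. 0 < e \<Longrightarrow> \<exists>m\<in>M. hnorm ip (x - m) < e"
    by (rule mp[OF spec[OF closed]]) (intro allI impI that)
qed

lemma closed_subspaceI: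
  assumes "0 \<in> M" and "\<And>x y. x \<in> M \<Longrightarrow> y \<in> M \<Longrightarrow> x + y \<in> M"
    and "\<And>c x. x \<in> M \<Longrightarrow> sc c x \<in> M"
    and "\<And>x. (\<And>e. 0 < e \<Longrightarrow> \<exists>m\<in>M. hnorm ip (x - m) < e) \<Longrightarrow> x \<in> M"
  shows "closed_subspace M"
  unfolding closed_subspace_def
proof (intro conjI ballI allI impI)
  show "0 \<in> M" by fact
  show "x + y \<in> M" if "x \<in> M" "y \<in> M" for x y using assms(2) that .
  show "sc c x \<in> M" if "x \<in> M" for c x using assms(3) that .
  show "x \<in> M" if "\<forall>e>0. \<exists>m\<in>M. hnorm ip (x - m) < e" for x
    using that by (intro assms(4)) blast
qed

lemma minimizing_sequence_Cauchy:
  assumes M: "closed_subspace M" and m: "\<And>n. m n \<in> M"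
    and d: "\<And>y. y \<in> M \<Longrightarrow> d \<le> hnorm ip (x - y)"
    and lim: "(\<lambda>n. hnorm ip (x - m n)) \<longlonglongrightarrow> d"
  shows "\<forall>e>0. \<exists>N. \<forall>j\<ge>N. \<forall>k\<ge>N. hnorm ip (m j - m k) < e"
proof (intro allI impI)
  fix e :: real
  assume "0 < e"
  have "0 \<le> d" using lim by (rule LIMSEQ_le_const) simp
  have "(\<lambda>n. (hnorm ip (x - m n))\<^sup>2) \<longlonglongrightarrow> d\<^sup>2"
    using lim by (rule tendsto_power)
  moreover have "d\<^sup>2 < d\<^sup>2 + e\<^sup>2 / 4" using \<open>0 < e\<close> by simp
  ultimately have "\<forall>\<^sub>F n in sequentially. (hnorm ip (x - m n))\<^sup>2 < d\<^sup>2 + e\<^sup>2 / 4"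
    by (rule order_tendstoD(2))
  then obtain N where N: "\<And>n. N \<le> n \<Longrightarrow> (hnorm ip (x - m n))\<^sup>2 < d\<^sup>2 + e\<^sup>2 / 4"
    unfolding eventually_sequentially by blast
  have "hnorm ip (m j - m k) < e" if "N \<le> j" "N \<le> k" for j k
  proof -
    have "sc (1/2) (m j + m k) \<in> M"
      using m by (intro closed_subspace_scale[OF M] closed_subspace_add[OF M])
    then have "2 * d \<le> hnorm ip ((x - m j) + (x - m k))"
      by (simp add: hnorm_midpoint d)
    then have "4 * d\<^sup>2 \<le> (hnorm ip ((x - m j) + (x - m k)))\<^sup>2"
      using \<open>0 \<le> d\<close> power_mono[of "2 * d" _ 2] by (simp add: power_mult_distrib)
    moreover have "(x - m j) - (x - m k) = m k - m j" by simp
    ultimately have "(hnorm ip (m k - m j))\<^sup>2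
        \<le> 2 * (hnorm ip (x - m j))\<^sup>2 + 2 * (hnorm ip (x - m k))\<^sup>2 - 4 * d\<^sup>2"
      using parallelogram[of "x - m j" "x - m k"] by (simp add: hnorm_sq)
    also have "\<dots> < e\<^sup>2" using N[OF \<open>N \<le> j\<close>] N[OF \<open>N \<le> k\<close>] by simp
    finally show ?thesis
      using \<open>0 < e\<close> by (simp add: hnorm_diff_commute power_less_imp_less_base)
  qed
  then show "\<exists>N. \<forall>j\<ge>N. \<forall>k\<ge>N. hnorm ip (m j - m k) < e" by blast
qed

lemma closest_point_exists:
  assumes M: "closed_subspace M"
  shows "\<exists>p\<in>M. \<forall>y\<in>M. hnorm ip (x - p) \<le> hnorm ip (x - y)"
proof -
  define D where "D = (\<lambda>y. hnorm ip (x - y)) ` M"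
  define d where "d = Inf D"
  have bdd: "bdd_below D" unfolding D_def by (rule bdd_belowI2[of _ 0]) simp
  have d_le: "d \<le> hnorm ip (x - y)" if "y \<in> M" for y
    unfolding d_def D_def using bdd[unfolded D_def] that by (rule cINF_lower)
  have "d \<in> closure D"
    unfolding d_def using closed_subspace_zero[OF M] bdd by (intro closure_contains_Inf) (auto simp: D_def)
  then obtain v where "\<And>n. v n \<in> D" and "v \<longlonglongrightarrow> d"
    unfolding closure_sequential by blast
  then have "\<forall>n. \<exists>y. y \<in> M \<and> v n = hnorm ip (x - y)" unfolding D_def by blast
  then obtain m where "\<forall>n. m n \<in> M \<and> v n = hnorm ip (x - m n)" by metis
  then have m: "\<And>n. m n \<in> M" and "v = (\<lambda>n. hnorm ip (x - m n))" by auto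
  with \<open>v \<longlonglongrightarrow> d\<close> have lim: "(\<lambda>n. hnorm ip (x - m n)) \<longlonglongrightarrow> d" by simp
  obtain p where p: "(\<lambda>n. hnorm ip (m n - p)) \<longlonglongrightarrow> 0"
    using Cauchy_convergent minimizing_sequence_Cauchy[OF M m d_le lim] by blast
  have "p \<in> M"
  proof (rule closed_subspace_closed[OF M])
    fix e :: real
    assume "0 < e"
    from LIMSEQ_D[OF p this] obtain n where "norm (hnorm ip (m n - p) - 0) < e" by blast
    then have "hnorm ip (p - m n) < e" by (simp add: hnorm_diff_commute)
    then show "\<exists>y\<in>M. hnorm ip (p - y) < e" using m by blast
  qed
  moreover have "hnorm ip (x - p) \<le> d"
  proof (rule LIMSEQ_le_const)
    show "(\<lambda>n. hnorm ip (x - m n) + hnorm ip (m n - p)) \<longlonglongrightarrow> d"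
      using tendsto_add[OF lim p] by simp
    show "\<exists>N. \<forall>n\<ge>N. hnorm ip (x - p) \<le> hnorm ip (x - m n) + hnorm ip (m n - p)"
      using hnorm_triangle_diff by blast
  qed
  ultimately show ?thesis using d_le by force
qed

theorem projection_theorem:
  assumes M: "closed_subspace M"
  shows "\<exists>p\<in>M. \<forall>y\<in>M. ip (x - p) y = 0"
proof -
  obtain p where "p \<in> M" and closest: "\<And>y. y \<in> M \<Longrightarrow> hnorm ip (x - p) \<le> hnorm ip (x - y)"
    using closest_point_exists[OF M] by blast
  have "ip (x - p) y = 0" if "y \<in> M" for y
  proof (rule orthogonal_if_locally_minimal)
    fix r :: real
    have "p + sc (of_real r * ip (x - p) y) y \<in> M"
      using \<open>p \<in> M\<close> \<open>y \<in> M\<close> by (intro closed_subspace_add[OF M] closed_subspace_scale[OF M])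
    from closest[OF this] show "hnorm ip (x - p) \<le> hnorm ip (x - p - sc (of_real r * ip (x - p) y) y)"
      by (simp add: diff_diff_eq)
  qed
  with \<open>p \<in> M\<close> show ?thesis by blast
qed

lemma closed_subspace_kernel:
  assumes add: "\<And>x y. f (x + y) = f x + f y" and scale: "\<And>c x. f (sc c x) = c * f x"
    and bound: "\<And>x. cmod (f x) \<le> K * hnorm ip x"
  shows "closed_subspace {x. f x = 0}"
proof (rule closed_subspaceI)
  have diff: "f (x - y) = f x - f y" for x y
    using add[of "x - y" y] by simp
  show "0 \<in> {x. f x = 0}" using diff[of 0 0] by simp
  show "x + y \<in> {x. f x = 0}" if "x \<in> {x. f x = 0}" "y \<in> {x. f x = 0}" for x y
    using that by (simp add: add)
  show "sc c x \<in> {x. f x = 0}" if "x \<in> {x. f x = 0}" for c x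
    using that by (simp add: scale)
  obtain K' where "0 < K'" and K': "\<And>x. cmod (f x) \<le> K' * hnorm ip x"
    using ex_pos_factor_bound[of "\<lambda>x. cmod (f x)", OF bound] by auto
  fix x
  assume approx: "\<And>e. 0 < e \<Longrightarrow> \<exists>m\<in>{x. f x = 0}. hnorm ip (x - m) < e"
  have "cmod (f x) \<le> 0 + e" if "0 < e" for e
  proof -
    obtain m where "f m = 0" and m: "hnorm ip (x - m) < e / K'"
      using approx[of "e / K'"] \<open>0 < e\<close> \<open>0 < K'\<close> by auto
    then have "cmod (f x) = cmod (f (x - m))" by (simp add: diff)
    also have "\<dots> \<le> K' * hnorm ip (x - m)" by (rule K')
    also have "\<dots> \<le> e" using m \<open>0 < K'\<close> by (simp add: field_simps)
    finally show ?thesis by simp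
  qed
  then have "cmod (f x) \<le> 0" by (rule field_le_epsilon)
  then show "x \<in> {x. f x = 0}" by simp
qed

theorem riesz_representation:
  assumes add: "\<And>x y. f (x + y) = f x + f y" and scale: "\<And>c x. f (sc c x) = c * f x"
    and bound: "\<And>x. cmod (f x) \<le> K * hnorm ip x"
  shows "\<exists>z. \<forall>x. f x = ip x z"
proof (cases "\<forall>x. f x = 0")
  case True
  then show ?thesis by (intro exI[of _ 0]) simp
next
  case False
  then obtain x0 where "f x0 \<noteq> 0" by blast
  have diff: "f (x - y) = f x - f y" for x y
    using add[of "x - y" y] by simp
  obtain p where "f p = 0" and perp: "\<And>m. f m = 0 \<Longrightarrow> ip (x0 - p) m = 0"
    using projection_theorem[OF closed_subspace_kernel[OF assms], of x0] by auto
  define w where "w = x0 - p"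
  have "f w \<noteq> 0" using \<open>f x0 \<noteq> 0\<close> \<open>f p = 0\<close> by (simp add: w_def diff)
  then have "w \<noteq> 0" using diff[of 0 0] by auto
  then have "ip w w \<noteq> 0" using hnorm_eq_0_iff[of w] by (auto simp: hnorm_def)
  define c where "c = f w / ip w w"
  have "f x = c * ip x w" for x
  proof -
    have "f (x - sc (f x / f w) w) = 0" using \<open>f w \<noteq> 0\<close> by (simp add: diff scale)
    then have "ip w (x - sc (f x / f w) w) = 0" using perp unfolding w_def by blast
    then have "ip (x - sc (f x / f w) w) w = 0"
      using hermitian[of "x - sc (f x / f w) w" w] by simp
    then have "ip x w = (f x / f w) * ip w w" by (simp add: diff_left scale_left)
    with \<open>f w \<noteq> 0\<close> \<open>ip w w \<noteq> 0\<close> show ?thesis by (simp add: c_def field_simps)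
  qed
  then have "f x = ip x (sc (cnj c) w)" for x by (simp add: scale_right)
  then show ?thesis by blast
qed

lemma bounded_opD:
  assumes "bounded_op sc ip T"
  shows bounded_op_add: "T (x + y) = T x + T y"
    and bounded_op_scale: "T (sc c x) = sc c (T x)"
    and bounded_op_bound: "\<exists>K>0. \<forall>x. hnorm ip (T x) \<le> K * hnorm ip x"
proof -
  have "module_hom sc sc T"
    using assms by (simp add: bounded_op_def module_hom_iff_linear)
  then show "T (x + y) = T x + T y" "T (sc c x) = sc c (T x)"
    by (simp_all add: module_hom.add module_hom.scale)
  obtain K where "\<And>x. hnorm ip (T x) \<le> K * hnorm ip x"
    using assms by (auto simp: bounded_op_def)
  then show "\<exists>K>0. \<forall>x. hnorm ip (T x) \<le> K * hnorm ip x"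
    by (rule ex_pos_factor_bound) simp
qed

lemma ip_hadj:
  assumes T: "bounded_op sc ip T"
  shows "ip (T x) y = ip x (hadj ip T y)"
proof -
  obtain K where K: "\<And>x. hnorm ip (T x) \<le> K * hnorm ip x"
    using bounded_op_bound[OF T] by blast
  have bound: "cmod (ip (T x) y) \<le> (K * hnorm ip y) * hnorm ip x" for x
    using cauchy_schwarz[of "T x" y] mult_right_mono[OF K[of x] hnorm_nonneg[of y]]
    by (simp add: algebra_simps)
  have "\<exists>z. \<forall>x. ip (T x) y = ip x z"
    by (rule riesz_representation[where K = "K * hnorm ip y"])
      (simp_all add: bounded_op_add[OF T] bounded_op_scale[OF T] add_left scale_left bound)
  then obtain z where z: "\<And>x. ip (T x) y = ip x z" by blast
  have "\<exists>!z. \<forall>x. ip (T x) y = ip x z"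
  proof (rule ex1I)
    show "\<forall>x. ip (T x) y = ip x z" using z by blast
    show "z' = z" if "\<forall>x. ip (T x) y = ip x z'" for z'
      by (rule eq_if_ip_right_eq) (simp add: that[rule_format, symmetric] z)
  qed
  then have "\<forall>x. ip (T x) y = ip x (THE z. \<forall>x. ip (T x) y = ip x z)" by (rule theI')
  then show ?thesis unfolding hadj_def by (rule spec)
qed

abbreviation hdist :: "'h \<Rightarrow> 'h \<Rightarrow> real" where
  "hdist x y \<equiv> hnorm ip (x - y)"

lemma Metric_space_hdist: "Metric_space UNIV hdist"
proof
  show "0 \<le> hdist x y" for x y by simp
  show "hdist x y = hdist y x" for x y by (rule hnorm_diff_commute)
  show "hdist x y = 0 \<longleftrightarrow> x = y" for x y by simp
  show "hdist x z \<le> hdist x y + hdist y z" for x y z by (rule hnorm_triangle_diff)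
qed

lemma mcomplete_hdist: "Metric_space.mcomplete UNIV hdist"
  unfolding Metric_space.mcomplete_def[OF Metric_space_hdist]
proof (intro allI impI)
  fix f :: "nat \<Rightarrow> 'h"
  assume "Metric_space.MCauchy UNIV hdist f"
  then have Cauchy: "\<forall>e>0. \<exists>N. \<forall>n n'. N \<le> n \<longrightarrow> N \<le> n' \<longrightarrow> hdist (f n) (f n') < e"
    unfolding Metric_space.MCauchy_def[OF Metric_space_hdist] by (rule conjunct2)
  have "\<forall>e>0. \<exists>N. \<forall>m\<ge>N. \<forall>n\<ge>N. hnorm ip (f m - f n) < e"
  proof (intro allI impI)
    fix e :: real
    assume "0 < e"
    obtain N where "\<forall>n n'. N \<le> n \<longrightarrow> N \<le> n' \<longrightarrow> hdist (f n) (f n') < e"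
      using Cauchy[rule_format, OF \<open>0 < e\<close>] by (elim exE)
    then show "\<exists>N. \<forall>m\<ge>N. \<forall>n\<ge>N. hnorm ip (f m - f n) < e" by (intro exI[of _ N]) simp
  qed
  then obtain l where "(\<lambda>n. hnorm ip (f n - l)) \<longlonglongrightarrow> 0"
    by (rule Cauchy_convergent[THEN exE])
  then have "limitin (Metric_space.mtopology UNIV hdist) f l sequentially"
    by (simp add: Metric_space.limitin_metric_dist_null[OF Metric_space_hdist])
  then show "\<exists>l. limitin (Metric_space.mtopology UNIV hdist) f l sequentially" ..
qed

lemma cmod_ip_le_left: "cmod (ip y w) \<le> cmod (ip y' w) + hnorm ip (y - y') * hnorm ip w"
proof -
  have "ip y w = ip (y - y') w + ip y' w" by (simp add: diff_left)
  then have "cmod (ip y w) \<le> cmod (ip (y - y') w) + cmod (ip y' w)"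
    by (metis norm_triangle_ineq)
  with cauchy_schwarz[of "y - y'" w] show ?thesis by linarith
qed

lemma closedin_ip_sublevel:
  "closedin (Metric_space.mtopology UNIV hdist) {y. \<forall>w\<in>W. cmod (ip y w) \<le> b}"
  unfolding Metric_space.closedin_metric[OF Metric_space_hdist]
proof (intro conjI allI impI)
  fix y
  assume "y \<in> UNIV - {y. \<forall>w\<in>W. cmod (ip y w) \<le> b}"
  then obtain w where "w \<in> W" and "b < cmod (ip y w)" by auto
  define r where "r = (cmod (ip y w) - b) / (hnorm ip w + 1)"
  have "0 < hnorm ip w + 1" using hnorm_nonneg[of w] by linarith
  then have "0 < r" using \<open>b < cmod (ip y w)\<close> by (simp add: r_def)
  have far: "b < cmod (ip y' w)" if "hnorm ip (y - y') < r" for y'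
  proof -
    have "hnorm ip (y - y') * hnorm ip w \<le> r * hnorm ip w"
      using that by (intro mult_right_mono) auto
    also have "\<dots> < r * (hnorm ip w + 1)" using \<open>0 < r\<close> by simp
    also have "\<dots> = cmod (ip y w) - b" using \<open>0 < hnorm ip w + 1\<close> by (simp add: r_def)
    finally show ?thesis using cmod_ip_le_left[of y w y'] by linarith
  qed
  have "y' \<notin> {y. \<forall>w\<in>W. cmod (ip y w) \<le> b}" if "y' \<in> Metric_space.mball UNIV hdist y r" for y'
    using far[of y'] that \<open>w \<in> W\<close> by (force simp: Metric_space.in_mball[OF Metric_space_hdist])
  then show "\<exists>r>0. disjnt {y. \<forall>w\<in>W. cmod (ip y w) \<le> b} (Metric_space.mball UNIV hdist y r)"
    using \<open>0 < r\<close> unfolding disjnt_def by blast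
qed simp

lemma ip_bound_of_bound_on_ball:
  assumes "0 < r" and ball: "\<And>y. hnorm ip y < r \<Longrightarrow> cmod (ip y w) \<le> B"
  shows "cmod (ip y w) \<le> 2 * B / r * hnorm ip y"
proof (cases "y = 0")
  case True
  then show ?thesis by simp
next
  case False
  then have "0 < hnorm ip y" by (simp add: hnorm_pos_iff)
  define c where "c = r / (2 * hnorm ip y)"
  have "0 < c" unfolding c_def using \<open>0 < r\<close> \<open>0 < hnorm ip y\<close> by (intro divide_pos_pos) auto
  have "hnorm ip (sc (of_real c) y) = c * hnorm ip y"
    using \<open>0 < c\<close> by (simp add: hnorm_scale)
  also have "\<dots> = r / 2" using False by (simp add: c_def)
  finally have "hnorm ip (sc (of_real c) y) = r / 2" .
  then have "c * cmod (ip y w) \<le> B"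
    using ball[of "sc (of_real c) y"] \<open>0 < r\<close> \<open>0 < c\<close> by (simp add: scale_left norm_mult)
  then show ?thesis
    using \<open>0 < c\<close> \<open>0 < hnorm ip y\<close> \<open>0 < r\<close> by (simp add: c_def field_simps)
qed

theorem uniform_boundedness:
  assumes pointwise: "\<And>y. \<exists>B. \<forall>w\<in>W. cmod (ip y w) \<le> B"
  shows "\<exists>K. \<forall>w\<in>W. \<forall>y. cmod (ip y w) \<le> K * hnorm ip y"
proof -
  let ?X = "Metric_space.mtopology UNIV hdist"
  define E where "E n = {y. \<forall>w\<in>W. cmod (ip y w) \<le> real n}" for n :: nat
  have "y \<in> \<Union> (range E)" for y
  proof -
    obtain B where B: "\<And>w. w \<in> W \<Longrightarrow> cmod (ip y w) \<le> B" using pointwise by blast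
    have "B \<le> real (nat \<lceil>B\<rceil>)" by linarith
    with B have "y \<in> E (nat \<lceil>B\<rceil>)" by (force simp: E_def)
    then show ?thesis by blast
  qed
  then have "\<Union> (range E) = UNIV" by blast
  then have "?X interior_of \<Union> (range E) = UNIV"
    using interior_of_topspace[of ?X] by (simp add: Metric_space.topspace_mtopology[OF Metric_space_hdist])
  moreover have "closedin ?X (E n)" for n
    unfolding E_def by (rule closedin_ip_sublevel)
  ultimately obtain n where "?X interior_of E n \<noteq> {}"
    using Metric_space.metric_Baire_category_alt[OF Metric_space_hdist mcomplete_hdist, of "range E"]
    by auto
  then obtain y0 where "y0 \<in> ?X interior_of E n" by blast
  moreover have "openin ?X (?X interior_of E n)" by simp
  ultimately obtain r where "0 < r" and "Metric_space.mball UNIV hdist y0 r \<subseteq> ?X interior_of E n"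
    unfolding Metric_space.openin_mtopology[OF Metric_space_hdist] by blast
  then have ball: "y \<in> E n" if "hnorm ip (y0 - y) < r" for y
    using that interior_of_subset[of ?X "E n"] by (auto simp: Metric_space.in_mball[OF Metric_space_hdist])
  have "cmod (ip y w) \<le> 2 * real n" if "w \<in> W" "hnorm ip y < r" for y w
  proof -
    have "y0 \<in> E n" "y0 + y \<in> E n"
      using ball \<open>0 < r\<close> that(2) by (simp_all add: hnorm_minus)
    then have "cmod (ip (y0 + y) w) \<le> real n" "cmod (ip y0 w) \<le> real n"
      using \<open>w \<in> W\<close> by (auto simp: E_def)
    moreover have "cmod (ip y w) \<le> cmod (ip (y0 + y) w) + cmod (ip y0 w)"
      using norm_triangle_ineq4[of "ip (y0 + y) w" "ip y0 w"] by (simp add: add_left)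
    ultimately show ?thesis by linarith
  qed
  then have "cmod (ip y w) \<le> 2 * (2 * real n) / r * hnorm ip y" if "w \<in> W" for y w
    using ip_bound_of_bound_on_ball[OF \<open>0 < r\<close>] that by blast
  then show ?thesis by blast
qed

definition closure_range :: "('h \<Rightarrow> 'h) \<Rightarrow> 'h set" where
  "closure_range T = {w. \<forall>e>0. \<exists>u. hnorm ip (w - T u) < e}"

lemma range_in_closure_range: "T u \<in> closure_range T"
  unfolding closure_range_def by (auto intro!: exI[of _ u])

lemma closure_range_add:
  assumes add: "\<And>x y. T (x + y) = T x + T y"
    and "x \<in> closure_range T" and "y \<in> closure_range T"
  shows "x + y \<in> closure_range T"
  unfolding closure_range_def
proof (intro CollectI allI impI)
  fix e :: real
  assume "0 < e"
  then have "0 < e / 2" by simp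
  then obtain u v where "hnorm ip (x - T u) < e / 2" "hnorm ip (y - T v) < e / 2"
    using assms(2,3) unfolding closure_range_def by blast
  moreover have "x + y - T (u + v) = (x - T u) + (y - T v)" by (simp add: add)
  then have "hnorm ip (x + y - T (u + v)) \<le> hnorm ip (x - T u) + hnorm ip (y - T v)"
    by (simp only: hnorm_triangle)
  ultimately have "hnorm ip (x + y - T (u + v)) < e" by linarith
  then show "\<exists>w. hnorm ip (x + y - T w) < e" ..
qed

lemma closure_range_scale:
  assumes scale: "\<And>c x. T (sc c x) = sc c (T x)" and x: "x \<in> closure_range T"
  shows "sc c x \<in> closure_range T"
proof (cases "c = 0")
  case True
  then show ?thesis using range_in_closure_range[of T 0] scale[of 0 0] by simp
next
  case False
  show ?thesis
    unfolding closure_range_def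
  proof (intro CollectI allI impI)
    fix e :: real
    assume "0 < e"
    with False have "0 < e / cmod c" by simp
    then obtain u where u: "hnorm ip (x - T u) < e / cmod c"
      using x unfolding closure_range_def by blast
    have "hnorm ip (sc c x - T (sc c u)) = cmod c * hnorm ip (x - T u)"
      by (simp add: scale sc.scale_right_diff_distrib[symmetric] hnorm_scale)
    also have "\<dots> < e" using u False by (simp add: field_simps)
    finally show "\<exists>w. hnorm ip (sc c x - T w) < e" ..
  qed
qed

lemma closure_range_closed:
  assumes approx: "\<And>e. 0 < e \<Longrightarrow> \<exists>m\<in>closure_range T. hnorm ip (x - m) < e"
  shows "x \<in> closure_range T"
  unfolding closure_range_def
proof (intro CollectI allI impI)
  fix e :: real
  assume "0 < e"
  then have "0 < e / 2" by simp
  then obtain m where "m \<in> closure_range T" and "hnorm ip (x - m) < e / 2"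
    using approx by blast
  moreover from this(1) \<open>0 < e / 2\<close> obtain u where "hnorm ip (m - T u) < e / 2"
    unfolding closure_range_def by blast
  ultimately have "hnorm ip (x - T u) < e"
    using hnorm_triangle_diff[of x "T u" m] by linarith
  then show "\<exists>u. hnorm ip (x - T u) < e" ..
qed

lemma closed_subspace_closure_range:
  assumes add: "\<And>x y. T (x + y) = T x + T y" and scale: "\<And>c x. T (sc c x) = sc c (T x)"
  shows "closed_subspace (closure_range T)"
proof (rule closed_subspaceI)
  show "0 \<in> closure_range T" using range_in_closure_range[of T 0] scale[of 0 0] by simp
  show "x + y \<in> closure_range T" if "x \<in> closure_range T" "y \<in> closure_range T" for x y
    using add that by (rule closure_range_add)
  show "sc c x \<in> closure_range T" if "x \<in> closure_range T" for c x
    using scale that by (rule closure_range_scale)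
  show "x \<in> closure_range T"
    if "\<And>e. 0 < e \<Longrightarrow> \<exists>m\<in>closure_range T. hnorm ip (x - m) < e" for x
    using that by (rule closure_range_closed)
qed

lemma ip_bound_closure_range:
  assumes bound: "\<And>u. cmod (ip (T u) z) \<le> c * hnorm ip (T u)" and "0 \<le> c"
    and w: "w \<in> closure_range T"
  shows "cmod (ip w z) \<le> c * hnorm ip w"
proof (rule field_le_epsilon)
  fix e :: real
  assume "0 < e"
  define D where "D = hnorm ip z + c + 1"
  have "0 < D" unfolding D_def using \<open>0 \<le> c\<close> hnorm_nonneg[of z] by linarith
  with \<open>0 < e\<close> have "0 < e / D" by simp
  then obtain u where u: "hnorm ip (w - T u) < e / D"
    using w unfolding closure_range_def by blast
  have "hnorm ip (T u) \<le> hnorm ip w + e / D"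
    using hnorm_triangle_diff[of "T u" 0 w] u by (simp add: hnorm_diff_commute[of "T u"])
  have "cmod (ip w z) \<le> cmod (ip (T u) z) + hnorm ip (w - T u) * hnorm ip z"
    by (rule cmod_ip_le_left)
  also have "\<dots> \<le> c * (hnorm ip w + e / D) + e / D * hnorm ip z"
    using bound[of u] mult_left_mono[OF \<open>hnorm ip (T u) \<le> hnorm ip w + e / D\<close> \<open>0 \<le> c\<close>]
      mult_right_mono[OF less_imp_le[OF u] hnorm_nonneg[of z]]
    by linarith
  also have "\<dots> = c * hnorm ip w + e * ((c + hnorm ip z) / D)"
    using \<open>0 < D\<close> by (simp add: field_simps)
  also have "\<dots> \<le> c * hnorm ip w + e * 1"
    using \<open>0 < e\<close> \<open>0 < D\<close> by (intro add_left_mono mult_left_mono) (simp_all add: D_def)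
  finally show "cmod (ip w z) \<le> c * hnorm ip w + e" by simp
qed

end

section \<open>Operators bounded for the A-seminorm\<close>

locale hilbert_pos_op = hilbert sc ip
  for sc :: "complex \<Rightarrow> 'h::ab_group_add \<Rightarrow> 'h" and ip +
  fixes A :: "'h \<Rightarrow> 'h"
  assumes positive: "positive_op sc ip A"
begin

lemma A_bounded_op: "bounded_op sc ip A"
  using positive by (simp add: positive_op_def)

lemmas A_add = bounded_op_add[OF A_bounded_op]
  and A_scale = bounded_op_scale[OF A_bounded_op]

lemma A_diff: "A (x - y) = A x - A y"
  using A_add[of "x - y" y] by (simp add: eq_diff_eq)

text \<open>Polarization: a complex sesquilinear form with real diagonal is hermitian.\<close>
lemma A_selfadjoint: "ip (A x) y = ip x (A y)"
proof -
  define Q where "Q x y = ip (A x) y" for x y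
  have real: "Im (Q v v) = 0" for v
    using positive by (simp add: positive_op_def Q_def)
  have "Q (y + x) (y + x) = Q y y + Q y x + Q x y + Q x x"
    by (simp add: Q_def A_add add_left add_right)
  then have "Im (Q y x + Q x y) = 0"
    using real[of "y + x"] real[of y] real[of x] by simp
  moreover have "Q (y + sc \<i> x) (y + sc \<i> x) = Q y y - \<i> * Q y x + \<i> * Q x y + Q x x"
    by (simp add: Q_def A_add A_scale add_left add_right scale_left scale_right) (simp add: algebra_simps)
  then have "Re (Q x y) - Re (Q y x) = 0"
    using real[of "y + sc \<i> x"] real[of y] real[of x] by simp
  ultimately have "Q x y = cnj (Q y x)" by (simp add: complex_eq_iff)
  then show ?thesis using hermitian[of x "A y"] by (simp add: Q_def)
qed

sublocale Aform: pos_hermitian_form sc "ipA ip A"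
proof
  show "ipA ip A (x + y) z = ipA ip A x z + ipA ip A y z" for x y z
    by (simp add: ipA_def A_add add_left)
  show "ipA ip A (sc c x) y = c * ipA ip A x y" for c x y
    by (simp add: ipA_def A_scale scale_left)
  show "ipA ip A y x = cnj (ipA ip A x y)" for x y
    using A_selfadjoint[of y x] hermitian[of "A x" y] by (simp add: ipA_def)
  show "0 \<le> Re (ipA ip A x x)" for x
    using positive by (simp add: positive_op_def ipA_def)
qed

lemma normA_eq_hnorm: "normA ip A = hnorm (ipA ip A)"
  by (simp add: fun_eq_iff normA_def hnorm_def)

lemma hnorm_ipA_le: "\<exists>c\<ge>0. \<forall>v. hnorm (ipA ip A) v \<le> c * hnorm ip v"
proof -
  obtain K where "0 < K" and K: "\<And>x. hnorm ip (A x) \<le> K * hnorm ip x"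
    using bounded_op_bound[OF A_bounded_op] by blast
  have "(hnorm (ipA ip A) v)\<^sup>2 \<le> (sqrt K * hnorm ip v)\<^sup>2" for v
  proof -
    have "(hnorm (ipA ip A) v)\<^sup>2 \<le> cmod (ip (A v) v)"
      using complex_Re_le_cmod by (simp add: Aform.hnorm_sq ipA_def)
    also have "\<dots> \<le> hnorm ip (A v) * hnorm ip v" by (rule cauchy_schwarz)
    also have "\<dots> \<le> K * hnorm ip v * hnorm ip v" using K[of v] by (simp add: mult_right_mono)
    also have "\<dots> = (sqrt K * hnorm ip v)\<^sup>2"
      using \<open>0 < K\<close> by (simp add: power2_eq_square power_mult_distrib)
    finally show ?thesis .
  qed
  then have "hnorm (ipA ip A) v \<le> sqrt K * hnorm ip v" for v
    by (rule power2_le_imp_le) (use \<open>0 < K\<close> in simp)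
  then show ?thesis using \<open>0 < K\<close> by (intro exI[of _ "sqrt K"]) simp
qed

lemma A_eq_0_if_orthogonal_closure_range:
  assumes "\<And>m. m \<in> closure_range A \<Longrightarrow> ip v m = 0"
  shows "A v = 0"
proof -
  have "ip (A v) (A v) = ip v (A (A v))" by (rule A_selfadjoint)
  also have "\<dots> = 0" using assms range_in_closure_range by blast
  finally have "hnorm ip (A v) = 0" by (simp add: hnorm_def)
  then show ?thesis by simp
qed

text \<open>X y is the projection onto the closure of R(A) of a solution z of A z = T^* A y
  (Douglas' reduced solution); projecting changes z only by an element of ker A.\<close>
lemma A_adjoint_in_closure_range:
  assumes "T \<in> BA sc ip A"
  obtains X where "\<And>y. X y \<in> closure_range A" and "\<And>x y. ipA ip A (T x) y = ipA ip A x (X y)"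
proof -
  have T: "bounded_op sc ip T" and range: "range (hadj ip T \<circ> A) \<subseteq> range A"
    using assms by (auto simp: BA_def)
  have "\<exists>p\<in>closure_range A. \<forall>x. ipA ip A (T x) y = ipA ip A x p" for y
  proof -
    obtain z where z: "hadj ip T (A y) = A z" using range by auto
    obtain p where "p \<in> closure_range A" and "\<forall>m\<in>closure_range A. ip (z - p) m = 0"
      using projection_theorem[OF closed_subspace_closure_range[OF A_add A_scale]] by blast
    then have "A z = A p" using A_eq_0_if_orthogonal_closure_range[of "z - p"] by (simp add: A_diff)
    have "ipA ip A (T x) y = ipA ip A x p" for x
    proof -
      have "ipA ip A (T x) y = ip (T x) (A y)" by (simp add: ipA_def A_selfadjoint)
      also have "\<dots> = ip x (A p)" by (simp add: ip_hadj[OF T] z \<open>A z = A p\<close>)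
      also have "\<dots> = ipA ip A x p" by (simp add: ipA_def A_selfadjoint)
      finally show ?thesis .
    qed
    with \<open>p \<in> closure_range A\<close> show ?thesis by blast
  qed
  then obtain X where "\<And>y. X y \<in> closure_range A \<and> (\<forall>x. ipA ip A (T x) y = ipA ip A x (X y))"
    by metis
  with that show ?thesis by blast
qed

text \<open>The functionals ip _ (A (T u)) with hnorm ip (A u) \<le> 1 are pointwise bounded, since
  |ip y (A (T u))| = |ip (A u) (X y)| \<le> hnorm ip (X y); uniform boundedness does the rest.\<close>
lemma A_adjoint_bounded_on_unit_range:
  assumes adj: "\<And>x y. ipA ip A (T x) y = ipA ip A x (X y)"
  shows "\<exists>K. \<forall>u y. hnorm ip (A u) \<le> 1 \<longrightarrow> cmod (ip (A u) (X y)) \<le> K * hnorm ip y"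
proof -
  have swap: "cmod (ip y (A (T u))) = cmod (ip (A u) (X y))" for u y
  proof -
    have "ip y (A (T u)) = cnj (ip (A u) (X y))"
      using hermitian[of y "A (T u)"] adj[of u y] by (simp add: ipA_def)
    then show ?thesis by simp
  qed
  define W where "W = (\<lambda>u. A (T u)) ` {u. hnorm ip (A u) \<le> 1}"
  have "\<exists>B. \<forall>w\<in>W. cmod (ip y w) \<le> B" for y
  proof (intro exI ballI)
    fix w
    assume "w \<in> W"
    then obtain u where u: "w = A (T u)" "hnorm ip (A u) \<le> 1" by (auto simp: W_def)
    have "cmod (ip y w) \<le> hnorm ip (A u) * hnorm ip (X y)"
      unfolding u(1) swap by (rule cauchy_schwarz)
    also have "\<dots> \<le> hnorm ip (X y)" using u(2) by (simp add: mult_left_le_one_le)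
    finally show "cmod (ip y w) \<le> hnorm ip (X y)" .
  qed
  then have "\<exists>K. \<forall>w\<in>W. \<forall>y. cmod (ip y w) \<le> K * hnorm ip y"
    by (rule uniform_boundedness)
  then show ?thesis by (auto simp: W_def swap[symmetric])
qed

lemma A_adjoint_bounded_on_range:
  assumes adj: "\<And>x y. ipA ip A (T x) y = ipA ip A x (X y)"
  shows "\<exists>K\<ge>0. \<forall>u y. cmod (ip (A u) (X y)) \<le> K * hnorm ip y * hnorm ip (A u)"
proof -
  obtain K0 where K0: "\<And>u y. hnorm ip (A u) \<le> 1 \<Longrightarrow> cmod (ip (A u) (X y)) \<le> K0 * hnorm ip y"
    using A_adjoint_bounded_on_unit_range[OF adj] by blast
  define K where "K = max K0 0"
  have "cmod (ip (A u) (X y)) \<le> K * hnorm ip y * hnorm ip (A u)" for u y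
  proof (cases "A u = 0")
    case True
    then show ?thesis by simp
  next
    case False
    define s where "s = hnorm ip (A u)"
    have "0 < s" using False by (simp add: s_def hnorm_pos_iff)
    define u' where "u' = sc (of_real (1 / s)) u"
    have "A u' = sc (of_real (1 / s)) (A u)" by (simp add: u'_def A_scale)
    then have "hnorm ip (A u') = 1" using False by (simp add: hnorm_scale s_def norm_divide)
    then have "cmod (ip (A u') (X y)) \<le> K * hnorm ip y"
      using K0[of u' y] mult_right_mono[of K0 K "hnorm ip y"] by (simp add: K_def)
    moreover have "cmod (ip (A u') (X y)) = cmod (ip (A u) (X y)) / s"
      using \<open>0 < s\<close> \<open>A u' = _\<close> by (simp add: scale_left norm_mult norm_divide)
    ultimately show ?thesis using \<open>0 < s\<close> by (simp add: s_def field_simps)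
  qed
  then show ?thesis by (intro exI[of _ K]) (simp add: K_def)
qed

lemma A_adjoint_bounded:
  assumes adj: "\<And>x y. ipA ip A (T x) y = ipA ip A x (X y)"
    and range: "\<And>y. X y \<in> closure_range A"
  shows "\<exists>K\<ge>0. \<forall>y. hnorm ip (X y) \<le> K * hnorm ip y"
proof -
  obtain K where "0 \<le> K" and K: "\<And>u y. cmod (ip (A u) (X y)) \<le> K * hnorm ip y * hnorm ip (A u)"
    using A_adjoint_bounded_on_range[OF adj] by blast
  have "hnorm ip (X y) \<le> K * hnorm ip y" for y
  proof -
    have "cmod (ip (X y) (X y)) \<le> K * hnorm ip y * hnorm ip (X y)"
      by (rule ip_bound_closure_range[of A "X y" "K * hnorm ip y"])
        (use K range \<open>0 \<le> K\<close> in auto)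
    then have "hnorm ip (X y) * hnorm ip (X y) \<le> K * hnorm ip y * hnorm ip (X y)"
      by (simp add: cmod_diag power2_eq_square)
    then show ?thesis using \<open>0 \<le> K\<close> by (cases "X y = 0") (simp_all add: hnorm_pos_iff)
  qed
  with \<open>0 \<le> K\<close> show ?thesis by blast
qed

definition A_bounded :: "('h \<Rightarrow> 'h) \<Rightarrow> bool" where
  "A_bounded T \<longleftrightarrow> (\<exists>C. \<forall>x. normA ip A (T x) \<le> C * normA ip A x)"

lemma hnorm_ipA_le_if_A_symmetric:
  assumes symmetric: "\<And>u v. ipA ip A (R u) v = ipA ip A u (R v)"
    and bound: "\<And>x. hnorm ip (R x) \<le> L * hnorm ip x" and "0 < L"
  shows "hnorm (ipA ip A) (R x) \<le> L * hnorm (ipA ip A) x"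
proof -
  obtain c where "0 \<le> c" and c: "\<And>v. hnorm (ipA ip A) v \<le> c * hnorm ip v"
    using hnorm_ipA_le by blast
  show ?thesis
  proof (rule Aform.hnorm_le_if_symmetric_iterates_bounded[OF symmetric \<open>0 < L\<close>])
    fix k
    have "hnorm (ipA ip A) ((R ^^ k) x) \<le> c * (L ^ k * hnorm ip x)"
      using hnorm_funpow_le[OF bound] \<open>0 < L\<close>
      by (intro order_trans[OF c mult_left_mono[OF _ \<open>0 \<le> c\<close>]]) simp_all
    then show "hnorm (ipA ip A) ((R ^^ k) x) \<le> c * hnorm ip x * L ^ k"
      by (simp add: algebra_simps)
  qed
qed

text \<open>R = X T is A-symmetric and bounded for hnorm ip, hence for normA by Krein's lemma;
  and normA (T x)^2 = <x, R x>_A \<le> normA x * normA (R x).\<close>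
lemma A_bounded_if_A_adjoint_bounded:
  assumes adj: "\<And>x y. ipA ip A (T x) y = ipA ip A x (X y)"
    and "0 \<le> K" and X: "\<And>y. hnorm ip (X y) \<le> K * hnorm ip y"
    and "0 < KT" and T: "\<And>x. hnorm ip (T x) \<le> KT * hnorm ip x"
  shows "A_bounded T"
proof -
  define R where "R = X \<circ> T"
  define L where "L = K * KT + 1"
  have "0 < L" using \<open>0 \<le> K\<close> \<open>0 < KT\<close> by (simp add: L_def add_nonneg_pos)
  have "hnorm ip (R x) \<le> L * hnorm ip x" for x
  proof -
    have "hnorm ip (R x) \<le> K * (KT * hnorm ip x)"
      using X[of "T x"] mult_left_mono[OF T[of x] \<open>0 \<le> K\<close>] by (simp add: R_def)
    also have "\<dots> \<le> L * hnorm ip x" by (simp add: L_def algebra_simps)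
    finally show ?thesis .
  qed
  moreover have "ipA ip A (R u) v = ipA ip A u (R v)" for u v
  proof -
    have "ipA ip A (R u) v = cnj (ipA ip A (T v) (T u))"
      using Aform.hermitian[of "R u" v] adj[of v "T u"] by (simp add: R_def)
    also have "\<dots> = ipA ip A u (R v)"
      using Aform.hermitian[of "T u" "T v"] adj[of u "T v"] by (simp add: R_def)
    finally show ?thesis .
  qed
  ultimately have R: "hnorm (ipA ip A) (R x) \<le> L * hnorm (ipA ip A) x" for x
    using hnorm_ipA_le_if_A_symmetric \<open>0 < L\<close> by blast
  have "normA ip A (T x) \<le> sqrt L * normA ip A x" for x
  proof -
    have "(hnorm (ipA ip A) (T x))\<^sup>2 = Re (ipA ip A x (R x))"
      by (simp add: Aform.hnorm_sq adj R_def)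
    also have "\<dots> \<le> hnorm (ipA ip A) x * hnorm (ipA ip A) (R x)"
      by (rule Aform.Re_le_hnorm_mult)
    also have "\<dots> \<le> L * (hnorm (ipA ip A) x)\<^sup>2"
      using mult_left_mono[OF R[of x] Aform.hnorm_nonneg[of x]]
      by (simp add: power2_eq_square algebra_simps)
    also have "\<dots> = (sqrt L * hnorm (ipA ip A) x)\<^sup>2"
      using \<open>0 < L\<close> by (simp add: power_mult_distrib)
    finally show ?thesis
      unfolding normA_eq_hnorm by (rule power2_le_imp_le) (use \<open>0 < L\<close> in simp)
  qed
  then show ?thesis unfolding A_bounded_def by blast
qed

theorem A_bounded_if_BA:
  assumes T: "T \<in> BA sc ip A"
  shows "A_bounded T"
proof -
  obtain X where range: "\<And>y. X y \<in> closure_range A"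
    and adj: "\<And>x y. ipA ip A (T x) y = ipA ip A x (X y)"
    using A_adjoint_in_closure_range[OF T] by blast
  obtain K where "0 \<le> K" and "\<And>y. hnorm ip (X y) \<le> K * hnorm ip y"
    using A_adjoint_bounded[OF adj range] by blast
  moreover have "bounded_op sc ip T" using T by (simp add: BA_def)
  then obtain KT where "0 < KT" and "\<And>x. hnorm ip (T x) \<le> KT * hnorm ip x"
    using bounded_op_bound by blast
  ultimately show ?thesis by (rule A_bounded_if_A_adjoint_bounded[OF adj])
qed

lemma A_bounded_zero: "A_bounded (\<lambda>_. 0)"
  unfolding A_bounded_def normA_eq_hnorm by (intro exI[of _ 0]) simp

lemma A_bounded_scale:
  assumes "A_bounded S"
  shows "A_bounded (\<lambda>x. sc c (S x))"
proof -
  obtain C where C: "\<And>x. normA ip A (S x) \<le> C * normA ip A x"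
    using assms by (auto simp: A_bounded_def)
  have "normA ip A (sc c (S x)) \<le> (cmod c * C) * normA ip A x" for x
    using mult_left_mono[OF C[of x] norm_ge_zero[of c]]
    by (simp add: normA_eq_hnorm Aform.hnorm_scale mult.assoc)
  then show ?thesis unfolding A_bounded_def by blast
qed

lemma A_bounded_ipA_le:
  assumes "A_bounded F"
  obtains C
  where "\<And>a b. normA ip A a \<le> 1 \<Longrightarrow> normA ip A b \<le> 1 \<Longrightarrow> cmod (ipA ip A (F a) b) \<le> C"
proof -
  obtain C where C: "\<And>x. normA ip A (F x) \<le> C * normA ip A x"
    using assms by (auto simp: A_bounded_def)
  have "cmod (ipA ip A (F a) b) \<le> max C 0"
    if "normA ip A a \<le> 1" "normA ip A b \<le> 1" for a b
  proof -
    have "cmod (ipA ip A (F a) b) \<le> normA ip A (F a) * normA ip A b"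
      unfolding normA_eq_hnorm by (rule Aform.cauchy_schwarz)
    also have "\<dots> \<le> (max C 0 * normA ip A a) * normA ip A b"
    proof (rule mult_right_mono)
      show "normA ip A (F a) \<le> max C 0 * normA ip A a"
        using C[of a] mult_right_mono[of C "max C 0" "normA ip A a"]
        by (simp add: normA_eq_hnorm)
    qed (simp add: normA_eq_hnorm)
    also have "\<dots> = max C 0 * (normA ip A a * normA ip A b)" by (simp add: mult.assoc)
    also have "\<dots> \<le> max C 0 * 1"
      using that by (intro mult_left_mono mult_le_one) (simp_all add: normA_eq_hnorm)
    finally show ?thesis by simp
  qed
  then show ?thesis using that by blast
qed

section \<open>The operator matrix\<close>

lemma ipAA_opmat:
  "ipAA ip A (opmat P Q R U z) z
     = ipA ip A (P (fst z)) (fst z) + ipA ip A (Q (snd z)) (fst z)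
       + ipA ip A (R (fst z)) (snd z) + ipA ip A (U (snd z)) (snd z)"
  by (simp add: ipAA_def opmat_def Aform.add_left)

lemma normAA_eq:
  "normAA ip A z = sqrt ((normA ip A (fst z))\<^sup>2 + (normA ip A (snd z))\<^sup>2)"
  by (simp add: normAA_def ipAA_def normA_eq_hnorm Aform.hnorm_sq)

lemma bdd_above_opmat_numerical_range:
  assumes "A_bounded P" "A_bounded Q" "A_bounded R" "A_bounded U"
  shows "bdd_above ((\<lambda>z. cmod (ipAA ip A (opmat P Q R U z) z)) ` {z. normAA ip A z = 1})"
proof -
  obtain CP where
    CP: "\<And>a b. normA ip A a \<le> 1 \<Longrightarrow> normA ip A b \<le> 1 \<Longrightarrow> cmod (ipA ip A (P a) b) \<le> CP"
    by (rule A_bounded_ipA_le[OF assms(1)]) (rule that)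
  obtain CQ where
    CQ: "\<And>a b. normA ip A a \<le> 1 \<Longrightarrow> normA ip A b \<le> 1 \<Longrightarrow> cmod (ipA ip A (Q a) b) \<le> CQ"
    by (rule A_bounded_ipA_le[OF assms(2)]) (rule that)
  obtain CR where
    CR: "\<And>a b. normA ip A a \<le> 1 \<Longrightarrow> normA ip A b \<le> 1 \<Longrightarrow> cmod (ipA ip A (R a) b) \<le> CR"
    by (rule A_bounded_ipA_le[OF assms(3)]) (rule that)
  obtain CU where
    CU: "\<And>a b. normA ip A a \<le> 1 \<Longrightarrow> normA ip A b \<le> 1 \<Longrightarrow> cmod (ipA ip A (U a) b) \<le> CU"
    by (rule A_bounded_ipA_le[OF assms(4)]) (rule that)
  have "cmod (ipAA ip A (opmat P Q R U z) z) \<le> CP + CQ + CR + CU"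
    if "normAA ip A z = 1" for z
  proof -
    let ?a = "normA ip A (fst z)" and ?b = "normA ip A (snd z)"
    have sq: "?a\<^sup>2 + ?b\<^sup>2 = 1"
      using that by (simp add: normAA_eq)
    then have "?a\<^sup>2 \<le> 1" "?b\<^sup>2 \<le> 1"
      using zero_le_power2[of ?a] zero_le_power2[of ?b] by linarith+
    then have "?a \<le> 1" "?b \<le> 1"
      using power2_le_imp_le[of ?a 1] power2_le_imp_le[of ?b 1] by simp_all
    let ?p = "ipA ip A (P (fst z)) (fst z)" and ?q = "ipA ip A (Q (snd z)) (fst z)"
      and ?r = "ipA ip A (R (fst z)) (snd z)" and ?u = "ipA ip A (U (snd z)) (snd z)"
    have "cmod (?p + ?q + ?r + ?u) \<le> cmod ?p + cmod ?q + cmod ?r + cmod ?u"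
      using norm_triangle_ineq[of "?p + ?q + ?r" ?u] norm_triangle_ineq[of "?p + ?q" ?r]
        norm_triangle_ineq[of ?p ?q] by linarith
    then show ?thesis
      unfolding ipAA_opmat
      using CP[of "fst z" "fst z"] CQ[of "snd z" "fst z"] CR[of "fst z" "snd z"]
        CU[of "snd z" "snd z"] \<open>?a \<le> 1\<close> \<open>?b \<le> 1\<close>
      by linarith
  qed
  then show ?thesis by (intro bdd_aboveI2) blast
qed

lemma normA_unit_exists:
  assumes "\<exists>x. A x \<noteq> 0"
  shows "\<exists>x. normA ip A x = 1"
proof -
  have "\<exists>x. normA ip A x \<noteq> 0"
  proof (rule ccontr)
    assume "\<nexists>x. normA ip A x \<noteq> 0"
    then have "hnorm (ipA ip A) x = 0" for x by (simp add: normA_eq_hnorm)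
    then have "cmod (ip (A x) (A x)) = 0" for x
      using Aform.cauchy_schwarz[of x "A x"] by (simp add: ipA_def)
    then have "A x = 0" for x using hnorm_eq_0_iff[of "A x"] by (simp add: hnorm_def)
    with assms show False by blast
  qed
  then obtain x where "normA ip A x \<noteq> 0" by blast
  then have "normA ip A (sc (of_real (1 / normA ip A x)) x) = 1"
    by (simp add: normA_eq_hnorm Aform.hnorm_scale norm_divide)
  then show ?thesis ..
qed

lemma ipAA_offdiag_pair:
  assumes "\<And>c x. T (sc c x) = sc c (T x)" and "\<And>c x. S (sc c x) = sc c (S x)"
  shows "ipAA ip A (opmat (\<lambda>_. 0) T (\<lambda>x. sc \<i> (S x)) (\<lambda>_. 0) (sc a x, sc b x)) (sc a x, sc b x)
    = b * cnj a * ipA ip A (T x) x + \<i> * a * cnj b * ipA ip A (S x) x"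
  by (simp add: ipAA_opmat assms Aform.scale_left Aform.scale_right algebra_simps)

lemma normAA_pair:
  "normAA ip A (sc a x, sc b x) = sqrt ((cmod a)\<^sup>2 + (cmod b)\<^sup>2) * normA ip A x"
proof -
  have "(cmod a * normA ip A x)\<^sup>2 + (cmod b * normA ip A x)\<^sup>2
      = ((cmod a)\<^sup>2 + (cmod b)\<^sup>2) * (normA ip A x)\<^sup>2"
    by (simp add: power_mult_distrib algebra_simps)
  then show ?thesis
    by (simp add: normAA_eq normA_eq_hnorm Aform.hnorm_scale real_sqrt_mult)
qed

lemma cmod_ipA_plus_minus_le:
  assumes T: "T \<in> BA sc ip A" and S: "S \<in> BA sc ip A" and x: "normA ip A x = 1"
  defines "M \<equiv> opmat (\<lambda>_. 0) T (\<lambda>x. sc \<i> (S x)) (\<lambda>_. 0)"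
  shows "cmod (ipA ip A (T x + sc \<i> (S x)) x) \<le> 2 * omegaAA ip A M"
    and "cmod (ipA ip A (T x - sc \<i> (S x)) x) \<le> 2 * omegaAA ip A M"
proof -
  have "bdd_above ((\<lambda>z. cmod (ipAA ip A (M z) z)) ` {z. normAA ip A z = 1})"
    unfolding M_def using A_bounded_if_BA[OF T] A_bounded_if_BA[OF S]
    by (intro bdd_above_opmat_numerical_range A_bounded_zero A_bounded_scale)
  then have le_omega: "cmod (ipAA ip A (M z) z) \<le> omegaAA ip A M" if "normAA ip A z = 1" for z
    unfolding omegaAA_def using that by (intro cSUP_upper) simp_all
  have T_scale: "T (sc c v) = sc c (T v)" and S_scale: "S (sc c v) = sc c (S v)" for c v
    using T S by (simp_all add: BA_def bounded_op_scale)
  define c :: complex where "c = of_real (1 / sqrt 2)"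
  have "c * cnj c = 1 / 2" by (simp add: c_def complex_eq_iff power2_eq_square)
  have unit: "normAA ip A (sc c x, sc b x) = 1" if "cmod b = cmod c" for b
    using that x by (simp add: normAA_pair c_def power_divide norm_divide)
  define a where "a = ipA ip A (T x) x"
  define s where "s = ipA ip A (S x) x"
  have "ipAA ip A (M (sc c x, sc c x)) (sc c x, sc c x) = (c * cnj c) * (a + \<i> * s)"
    by (simp add: M_def ipAA_offdiag_pair[OF T_scale S_scale] a_def s_def algebra_simps)
  then have "ipA ip A (T x + sc \<i> (S x)) x = 2 * ipAA ip A (M (sc c x, sc c x)) (sc c x, sc c x)"
    using \<open>c * cnj c = 1 / 2\<close>
    by (simp add: a_def s_def Aform.add_left Aform.scale_left algebra_simps)
  then show "cmod (ipA ip A (T x + sc \<i> (S x)) x) \<le> 2 * omegaAA ip A M"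
    using le_omega[OF unit[of c]] by (simp add: norm_mult)
  have "ipAA ip A (M (sc c x, sc (\<i> * c) x)) (sc c x, sc (\<i> * c) x) = (c * cnj c) * (\<i> * a + s)"
    by (simp add: M_def ipAA_offdiag_pair[OF T_scale S_scale] a_def s_def algebra_simps)
  then have "ipA ip A (T x - sc \<i> (S x)) x
      = - 2 * \<i> * ipAA ip A (M (sc c x, sc (\<i> * c) x)) (sc c x, sc (\<i> * c) x)"
    using \<open>c * cnj c = 1 / 2\<close>
    by (simp add: a_def s_def Aform.diff_left Aform.scale_left algebra_simps)
  then show "cmod (ipA ip A (T x - sc \<i> (S x)) x) \<le> 2 * omegaAA ip A M"
    using le_omega[OF unit[of "\<i> * c"]] by (simp add: norm_mult)
qed

end

theorem lemma2p21:
  fixes sc :: "complex \<Rightarrow> 'h::ab_group_add \<Rightarrow> 'h"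
    and ip :: "'h \<Rightarrow> 'h \<Rightarrow> complex"
    and A T S :: "'h \<Rightarrow> 'h"
  assumes "complex_hilbert_space sc ip"
    and "positive_op sc ip A"
    and "\<exists>x. A x \<noteq> 0"
    and "T \<in> BA sc ip A"
    and "S \<in> BA sc ip A"
  shows "omegaA ip A (\<lambda>x. T x + sc \<i> (S x))
           \<le> 2 * omegaAA ip A (opmat (\<lambda>_. 0) T (\<lambda>x. sc \<i> (S x)) (\<lambda>_. 0)) \<and>
         omegaA ip A (\<lambda>x. T x - sc \<i> (S x))
           \<le> 2 * omegaAA ip A (opmat (\<lambda>_. 0) T (\<lambda>x. sc \<i> (S x)) (\<lambda>_. 0))"
proof -
  interpret hilbert_pos_op sc ip A
    using assms(1,2) by (intro hilbert_pos_op.intro hilbert.intro hilbert_pos_op_axioms.intro)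
  have "{x. normA ip A x = 1} \<noteq> {}"
    using normA_unit_exists[OF assms(3)] by blast
  then show ?thesis
    unfolding omegaA_def
    using cmod_ipA_plus_minus_le[OF assms(4,5)] by (auto intro!: cSUP_least)
qed

end
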